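(* Let $\gamma\in V$ be an element of infinite order. Then there is a non-empty open $\gamma$-wandering subset of $S^1$.
   Context: $S^1$ is the interval $[0,1]$ with $0$ and $1$ identified. Thompson's group $V$ is the group of left-continuous bijections of $S^1$ which map finite dyadic fractions to finite dyadic fractions, are differentiable except at finitely many finite dyadic fractions, and on each maximal interval of differentiability are linear with slope an integer power of $2$. For $\gamma\in V$, a subset $U\subseteq S^1$ is $\gamma$-wandering if for every $n\in\mathbb{Z}$ with $\gamma^n\neq e$ we have $\gamma^n(U)\cap U=\emptyset$. *)

theory Defs
  imports "HOL-Analysis.Analysis"
begin

(* S^1 = [0,1] with 0 ~ 1, represented by the half-open interval (0,1];
   the point 0 = 1 of the circle is represented by 1. *)
definition circle :: "real set" where
  "circle = {0<..1}"

(* quotient map R -> S^1 = R/Z with values in (0,1] *)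
definition circ_proj :: "real \<Rightarrow> real" where
  "circ_proj x = x - of_int (ceiling x) + 1"

definition circle_open :: "real set \<Rightarrow> bool" where
  "circle_open U \<longleftrightarrow> U \<subseteq> circle \<and> open (circ_proj -` U)"

definition dyadic :: "real \<Rightarrow> bool" where
  "dyadic x \<longleftrightarrow> (\<exists>(m::int) (n::nat). x = of_int m / 2 ^ n)"

(* Thompson's group V: bijections of S^1 (extended by the identity outside (0,1]),
   mapping dyadics to dyadics, and affine with slope a power of 2 on each piece
   (a,b] of a finite dyadic subdivision of (0,1] (pieces half-open on the left:
   left-continuity). *)
definition thompsonV :: "(real \<Rightarrow> real) set" where
  "thompsonV = {f. bij_betw f circle circle
      \<and> (\<forall>x. x \<notin> circle \<longrightarrow> f x = x)
      \<and> (\<forall>x\<in>circle. dyadic x \<longrightarrow> dyadic (f x))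
      \<and> (\<exists>D. finite D \<and> D \<subseteq> circle \<and> 1 \<in> D \<and> (\<forall>d\<in>D. dyadic d)
           \<and> (\<forall>a b. a \<in> insert 0 D \<and> b \<in> D \<and> a < b \<and> {a<..<b} \<inter> D = {} \<longrightarrow>
                 (\<exists>(k::int) c. \<forall>x\<in>{a<..b}. f x = 2 powr (real_of_int k) * x + c)))}"

definition vinv :: "(real \<Rightarrow> real) \<Rightarrow> real \<Rightarrow> real" where
  "vinv f = (\<lambda>x. if x \<in> circle then inv_into circle f x else x)"

definition vpow :: "(real \<Rightarrow> real) \<Rightarrow> int \<Rightarrow> real \<Rightarrow> real" where
  "vpow f n = (if 0 \<le> n then f ^^ nat n else vinv f ^^ nat (- n))"

definition infinite_order :: "(real \<Rightarrow> real) \<Rightarrow> bool" where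
  "infinite_order f \<longleftrightarrow> (\<forall>n::nat. 0 < n \<longrightarrow> f ^^ n \<noteq> id)"

definition wandering :: "(real \<Rightarrow> real) \<Rightarrow> real set \<Rightarrow> bool" where
  "wandering f U \<longleftrightarrow> (\<forall>n::int. vpow f n \<noteq> id \<longrightarrow> vpow f n ` U \<inter> U = {})"

end

theory Submission
  imports Defs
begin

(* An element g of V is, at some dyadic level N, affine with slope 2^k on each level-N dyadic
   interval, and then maps every dyadic interval of level L >= N onto one of level L - k.
   Consider the sums of the exponents k along orbits.  If they are unbounded below, some point
   returns to its level-N interval after a strict contraction, so an iterate maps that interval
   into one of its halves; the other half wanders, because all its forward images are dyadic
   intervals, hence nested with it or disjoint from it.  If they are unbounded above, the same
   applies to the inverse of g.  If they are bounded, the dyadic intervals along every orbit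
   range over a finite set, so every point is periodic with a uniformly bounded period,
   contradicting infinite order. *)

section \<open>Dyadic intervals\<close>

abbreviation pow2 :: "int \<Rightarrow> real" where
  "pow2 l \<equiv> 2 powr real_of_int l"

lemma pow2_add: "pow2 (a + b) = pow2 a * pow2 b"
  by (simp add: powr_add)

lemma pow2_nonneg: "0 \<le> l \<Longrightarrow> pow2 l = 2 ^ nat l"
  by (metis of_nat_nat powr_realpow zero_less_numeral of_int_of_nat_eq)

lemma pow2_nonneg_Ints: "0 \<le> l \<Longrightarrow> pow2 l \<in> \<int>"
  by (simp add: pow2_nonneg)

lemma pow2_inj: "pow2 a = pow2 b \<Longrightarrow> a = b"
  using powr_inj[of 2 "real_of_int a" "real_of_int b"] by simp

text \<open>This is \<open>((j - 1) / 2^l, j / 2^l]\<close> with \<open>j = \<lceil>x 2^l\<rceil>\<close>, half-open like the pieces of the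
  elements of \<open>V\<close>.\<close>
definition dyadic_interval :: "int \<Rightarrow> real \<Rightarrow> real set" where
  "dyadic_interval l x = {w. \<lceil>w * pow2 l\<rceil> = \<lceil>x * pow2 l\<rceil>}"

lemma dyadic_interval_self [simp]: "x \<in> dyadic_interval l x"
  by (simp add: dyadic_interval_def)

lemma dyadic_interval_eq: "w \<in> dyadic_interval l x \<Longrightarrow> dyadic_interval l w = dyadic_interval l x"
  by (simp add: dyadic_interval_def)

lemma dyadic_intervals_eq_or_disjoint:
  "dyadic_interval l x = dyadic_interval l y \<or> dyadic_interval l x \<inter> dyadic_interval l y = {}"
  using dyadic_interval_eq by blast

lemma ceiling_divide_cong:
  fixes t t' :: real and m :: int
  assumes "\<lceil>t\<rceil> = \<lceil>t'\<rceil>" "0 < m"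
  shows "\<lceil>t / m\<rceil> = \<lceil>t' / m\<rceil>"
proof -
  have "\<lceil>s / m\<rceil> = - ((- \<lceil>s\<rceil>) div m)" for s :: real
  proof -
    have "\<lceil>s / m\<rceil> = - \<lfloor>(- s) / real_of_int m\<rfloor>"
      by (simp add: ceiling_def)
    also have "\<lfloor>(- s) / real_of_int m\<rfloor> = \<lfloor>- s\<rfloor> div m"
      using assms(2) floor_divide_real_eq_div[of m "- s"] by simp
    finally show ?thesis
      by (simp add: ceiling_def)
  qed
  then show ?thesis
    using assms(1) by simp
qed

lemma dyadic_interval_antimono:
  assumes "l \<le> l'"
  shows "dyadic_interval l' x \<subseteq> dyadic_interval l x"
proof
  fix w assume "w \<in> dyadic_interval l' x"
  then have eq: "\<lceil>w * pow2 l'\<rceil> = \<lceil>x * pow2 l'\<rceil>"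
    by (simp add: dyadic_interval_def)
  define m :: int where "m = 2 ^ nat (l' - l)"
  have "pow2 (l' - l) = m"
    using assms by (metis m_def diff_ge_0_iff_ge of_int_numeral of_int_power pow2_nonneg)
  moreover have m: "0 < m"
    by (simp add: m_def)
  ultimately have "pow2 l' / m = pow2 l"
    using pow2_add[of l "l' - l"] by simp
  moreover have "\<lceil>w * pow2 l' / m\<rceil> = \<lceil>x * pow2 l' / m\<rceil>"
    using eq m by (rule ceiling_divide_cong)
  ultimately show "w \<in> dyadic_interval l x"
    by (simp add: dyadic_interval_def flip: times_divide_eq_right)
qed

lemma dyadic_interval_subset:
  "l \<le> l' \<Longrightarrow> w \<in> dyadic_interval l x \<Longrightarrow> dyadic_interval l' w \<subseteq> dyadic_interval l x"
  using dyadic_interval_antimono dyadic_interval_eq by blast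

lemma dyadic_intervals_nested_or_disjoint:
  assumes "dyadic_interval l x \<inter> dyadic_interval l' y \<noteq> {}"
  shows "dyadic_interval l x \<subseteq> dyadic_interval l' y \<or> dyadic_interval l' y \<subseteq> dyadic_interval l x"
proof -
  obtain z where z: "z \<in> dyadic_interval l x" "z \<in> dyadic_interval l' y"
    using assms by blast
  show ?thesis
    using dyadic_interval_subset[OF _ z(1), of l'] dyadic_interval_subset[OF _ z(2), of l]
      dyadic_interval_eq[OF z(1)] dyadic_interval_eq[OF z(2)]
    by (cases "l \<le> l'") auto
qed

lemma ceiling_scaled_circle:
  assumes "x \<in> circle" "0 \<le> l"
  shows "\<lceil>x * pow2 l\<rceil> \<in> {1 .. 2 ^ nat l}"
proof -
  have x: "0 < x" "x \<le> 1"
    using assms by (auto simp: circle_def)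
  have "pow2 l = real_of_int (2 ^ nat l)"
    using assms(2) by (simp add: pow2_nonneg)
  then show ?thesis
    using x by (simp add: zero_less_ceiling int_one_le_iff_zero_less ceiling_le_iff)
qed

lemma dyadic_interval_subset_circle:
  assumes "x \<in> circle" "0 \<le> l"
  shows "dyadic_interval l x \<subseteq> circle"
proof
  fix w assume "w \<in> dyadic_interval l x"
  then have "\<lceil>w * pow2 l\<rceil> \<in> {1 .. 2 ^ nat l}"
    using ceiling_scaled_circle[OF assms] by (simp add: dyadic_interval_def)
  moreover have "pow2 l = real_of_int (2 ^ nat l)"
    using assms(2) by (simp add: pow2_nonneg)
  ultimately have "0 < w * pow2 l" "w * pow2 l \<le> pow2 l"
    by (auto simp: ceiling_le_iff)
  then show "w \<in> circle"
    by (auto simp: circle_def zero_less_mult_iff)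
qed

lemma dyadic_interval_right_end:
  fixes x :: real and l :: int
  defines "t \<equiv> real_of_int \<lceil>x * pow2 l\<rceil> / pow2 l"
  shows "t \<in> dyadic_interval l x" and "\<And>w. w \<in> dyadic_interval l x \<Longrightarrow> w \<le> t"
proof -
  show "t \<in> dyadic_interval l x"
    by (simp add: t_def dyadic_interval_def)
  fix w assume "w \<in> dyadic_interval l x"
  then have "w * pow2 l \<le> real_of_int \<lceil>x * pow2 l\<rceil>"
    unfolding dyadic_interval_def using le_of_int_ceiling[of "w * pow2 l"] by simp
  then show "w \<le> t"
    by (simp add: t_def field_simps)
qed

lemma greaterThanLessThan_subset_dyadic_interval:
  "{(of_int \<lceil>x * pow2 l\<rceil> - 1) / pow2 l <..< of_int \<lceil>x * pow2 l\<rceil> / pow2 l} \<subseteq> dyadic_interval l x"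
proof
  fix w assume "w \<in> {(of_int \<lceil>x * pow2 l\<rceil> - 1) / pow2 l <..< of_int \<lceil>x * pow2 l\<rceil> / pow2 l}"
  then have "of_int \<lceil>x * pow2 l\<rceil> - 1 < w * pow2 l" "w * pow2 l < of_int \<lceil>x * pow2 l\<rceil>"
    by (simp_all add: field_simps)
  then show "w \<in> dyadic_interval l x"
    by (simp add: dyadic_interval_def ceiling_eq_iff)
qed

lemma dyadic_interval_halves:
  obtains z1 z2 where "z1 \<in> dyadic_interval l x" "z2 \<in> dyadic_interval l x"
    "dyadic_interval (l + 1) z1 \<inter> dyadic_interval (l + 1) z2 = {}"
proof
  let ?j = "\<lceil>x * pow2 l\<rceil>"
  have l1: "pow2 (l + 1) = 2 * pow2 l"
    using pow2_add[of l 1] by simp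
  have "real_of_int ?j / pow2 l * pow2 (l + 1) = real_of_int (2 * ?j)"
    "(real_of_int ?j - 1/2) / pow2 l * pow2 (l + 1) = real_of_int (2 * ?j - 1)"
    unfolding l1 by (simp_all add: field_simps)
  then have "\<lceil>real_of_int ?j / pow2 l * pow2 (l + 1)\<rceil> = 2 * ?j"
    "\<lceil>(real_of_int ?j - 1/2) / pow2 l * pow2 (l + 1)\<rceil> = 2 * ?j - 1"
    by (simp_all only: ceiling_of_int)
  then show "dyadic_interval (l + 1) (real_of_int ?j / pow2 l) \<inter>
      dyadic_interval (l + 1) ((real_of_int ?j - 1/2) / pow2 l) = {}"
    unfolding dyadic_interval_def by auto
qed (simp_all add: dyadic_interval_def ceiling_eq_iff)

lemma dyadic_interval_avoiding_half:
  "\<exists>z\<in>dyadic_interval l x. dyadic_interval (l + 1) z \<inter> dyadic_interval (l + 1) w = {}"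
proof -
  obtain z1 z2 where z: "z1 \<in> dyadic_interval l x" "z2 \<in> dyadic_interval l x"
    "dyadic_interval (l + 1) z1 \<inter> dyadic_interval (l + 1) z2 = {}"
    by (rule dyadic_interval_halves)
  then show ?thesis
    using dyadic_intervals_eq_or_disjoint[of "l + 1" z1 w] by blast
qed

lemma affine_eq_on_dyadic_interval_imp_slope_eq:
  fixes a b c d :: real
  assumes "\<forall>w\<in>dyadic_interval l z. a * w + c = b * w + d"
  shows "a = b"
proof -
  obtain z1 z2 where z: "z1 \<in> dyadic_interval l z" "z2 \<in> dyadic_interval l z"
    "dyadic_interval (l + 1) z1 \<inter> dyadic_interval (l + 1) z2 = {}"
    by (rule dyadic_interval_halves)
  then have "z1 \<noteq> z2"
    using dyadic_interval_self by blast
  moreover have "a * z1 + c = b * z1 + d" "a * z2 + c = b * z2 + d"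
    using assms z(1,2) by auto
  then have "(a - b) * (z1 - z2) = 0"
    by (simp add: algebra_simps)
  ultimately show ?thesis
    by simp
qed

section \<open>Maps of the circle that are affine on a dyadic grid\<close>

text \<open>The integrality of the translation makes the affine map send the level-\<open>L\<close> dyadic grid
  onto the level-\<open>L - k\<close> one for every \<open>L \<ge> N\<close>.\<close>
definition affine_piece :: "(real \<Rightarrow> real) \<Rightarrow> int \<Rightarrow> real \<Rightarrow> int \<Rightarrow> real \<Rightarrow> bool" where
  "affine_piece g N y k c \<longleftrightarrow>
     (\<forall>w\<in>dyadic_interval N y. g w = pow2 k * w + c) \<and> c * pow2 (N - k) \<in> \<int>"

definition dyadic_pl :: "(real \<Rightarrow> real) \<Rightarrow> int \<Rightarrow> bool" where
  "dyadic_pl g N \<longleftrightarrow>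
     0 \<le> N \<and> bij_betw g circle circle \<and> (\<forall>y\<in>circle. \<exists>k c. affine_piece g N y k c)"

definition log_slope :: "(real \<Rightarrow> real) \<Rightarrow> int \<Rightarrow> real \<Rightarrow> int" where
  "log_slope g N y = (SOME k. \<exists>c. affine_piece g N y k c)"

text \<open>By the chain rule, \<open>g ^^ n\<close> has slope \<open>2 powr log_slope_sum g N x n\<close> near \<open>x\<close>.\<close>
definition log_slope_sum :: "(real \<Rightarrow> real) \<Rightarrow> int \<Rightarrow> real \<Rightarrow> nat \<Rightarrow> int" where
  "log_slope_sum g N x n = (\<Sum>i<n. log_slope g N ((g ^^ i) x))"

lemma log_slope_sum_0 [simp]: "log_slope_sum g N x 0 = 0"
  by (simp add: log_slope_sum_def)

lemma log_slope_sum_Suc: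
  "log_slope_sum g N x (Suc n) = log_slope_sum g N x n + log_slope g N ((g ^^ n) x)"
  by (simp add: log_slope_sum_def)

lemma log_slope_sum_add:
  "log_slope_sum g N x (a + b) = log_slope_sum g N x a + log_slope_sum g N ((g ^^ a) x) b"
proof (induction b)
  case (Suc b)
  have "(g ^^ (a + b)) x = (g ^^ b) ((g ^^ a) x)"
    by (metis add.commute funpow_add o_apply)
  then show ?case
    using Suc.IH by (simp add: log_slope_sum_Suc)
qed simp

lemma log_slope_eq:
  assumes "w \<in> dyadic_interval N y"
  shows "log_slope g N w = log_slope g N y"
proof -
  have "dyadic_interval N w = dyadic_interval N y"
    using assms by (rule dyadic_interval_eq)
  then show ?thesis
    by (simp add: log_slope_def affine_piece_def)
qed

lemma bound_on_circle_pos: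
  fixes h :: "real \<Rightarrow> 'a::linordered_idom"
  assumes "\<forall>y\<in>circle. \<bar>h y\<bar> < K"
  shows "0 < K"
proof -
  have "(1::real) \<in> circle"
    by (simp add: circle_def)
  then show ?thesis
    using assms by fastforce
qed

lemma dyadic_pl_level_nonneg: "dyadic_pl g N \<Longrightarrow> 0 \<le> N"
  by (simp add: dyadic_pl_def)

lemma dyadic_pl_bij: "dyadic_pl g N \<Longrightarrow> bij_betw g circle circle"
  by (simp add: dyadic_pl_def)

lemma dyadic_pl_funpow_in_circle: "dyadic_pl g N \<Longrightarrow> x \<in> circle \<Longrightarrow> (g ^^ n) x \<in> circle"
  by (meson bij_betwE bij_betw_funpow dyadic_pl_bij)

lemma affine_piece_log_slope:
  assumes "dyadic_pl g N" "y \<in> circle"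
  obtains c where "affine_piece g N y (log_slope g N y) c"
proof -
  have "\<exists>k c. affine_piece g N y k c"
    using assms by (simp add: dyadic_pl_def)
  then have "\<exists>c. affine_piece g N y (log_slope g N y) c"
    unfolding log_slope_def by (rule someI_ex)
  then show ?thesis
    using that by blast
qed

lemma affine_on_dyadic_interval:
  assumes "dyadic_pl g N" "y \<in> circle" "N \<le> L"
  obtains c where "\<forall>w\<in>dyadic_interval L y. g w = pow2 (log_slope g N y) * w + c"
proof -
  obtain c where "affine_piece g N y (log_slope g N y) c"
    using affine_piece_log_slope[OF assms(1,2)] .
  then have "\<forall>w\<in>dyadic_interval L y. g w = pow2 (log_slope g N y) * w + c"
    using dyadic_interval_antimono[OF assms(3)] unfolding affine_piece_def by blast
  then show ?thesis
    by (rule that)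
qed

lemma image_dyadic_interval:
  assumes G: "dyadic_pl g N" and y: "y \<in> circle" and L: "N \<le> L"
  shows "g ` dyadic_interval L y = dyadic_interval (L - log_slope g N y) (g y)"
proof -
  define k where "k = log_slope g N y"
  obtain c where "affine_piece g N y k c"
    using affine_piece_log_slope[OF G y] k_def by blast
  then have aff: "\<And>w. w \<in> dyadic_interval L y \<Longrightarrow> g w = pow2 k * w + c"
    and c: "c * pow2 (N - k) \<in> \<int>"
    using dyadic_interval_antimono[OF L] by (auto simp: affine_piece_def)
  have "c * pow2 (N - k) * pow2 (L - N) \<in> \<int>"
    using L by (intro Ints_mult[OF c] pow2_nonneg_Ints) simp
  moreover have "pow2 (N - k) * pow2 (L - N) = pow2 (L - k)"
    using pow2_add[of "N - k" "L - N"] by simp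
  ultimately obtain m where m: "c * pow2 (L - k) = of_int m"
    by (metis Ints_cases mult.assoc)
  have shift: "\<lceil>(pow2 k * w + c) * pow2 (L - k)\<rceil> = \<lceil>w * pow2 L\<rceil> + m" for w
  proof -
    have "(pow2 k * w + c) * pow2 (L - k) = w * (pow2 k * pow2 (L - k)) + c * pow2 (L - k)"
      by (simp add: algebra_simps)
    also have "pow2 k * pow2 (L - k) = pow2 L"
      using pow2_add[of k "L - k"] by simp
    finally show ?thesis
      using m by simp
  qed
  have gy: "g y = pow2 k * y + c"
    using aff by simp
  show ?thesis
    unfolding k_def[symmetric]
  proof (intro equalityI subsetI)
    fix z assume "z \<in> g ` dyadic_interval L y"
    then obtain w where "w \<in> dyadic_interval L y" "z = pow2 k * w + c"
      using aff by (auto simp del: dyadic_interval_self)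
    then show "z \<in> dyadic_interval (L - k) (g y)"
      using shift[of w] shift[of y] gy by (simp add: dyadic_interval_def)
  next
    fix z assume z: "z \<in> dyadic_interval (L - k) (g y)"
    define w where "w = (z - c) / pow2 k"
    have zw: "z = pow2 k * w + c"
      by (simp add: w_def)
    have "w \<in> dyadic_interval L y"
      using z shift[of w] shift[of y] gy zw by (simp add: dyadic_interval_def)
    then show "z \<in> g ` dyadic_interval L y"
      using aff zw by (intro image_eqI[of _ _ w]) simp_all
  qed
qed

lemma funpow_image_dyadic_interval:
  assumes G: "dyadic_pl g N" and x: "x \<in> circle"
    and levels: "\<forall>i<n. N \<le> L - log_slope_sum g N x i"
  shows "(g ^^ n) ` dyadic_interval L x = dyadic_interval (L - log_slope_sum g N x n) ((g ^^ n) x)"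
  using levels
proof (induction n)
  case (Suc n)
  have "(g ^^ Suc n) ` dyadic_interval L x = g ` (g ^^ n) ` dyadic_interval L x"
    by (simp add: image_comp)
  also have "\<dots> = g ` dyadic_interval (L - log_slope_sum g N x n) ((g ^^ n) x)"
    using Suc by simp
  also have "\<dots> = dyadic_interval (L - log_slope_sum g N x (Suc n)) ((g ^^ Suc n) x)"
    using image_dyadic_interval[OF G dyadic_pl_funpow_in_circle[OF G x]] Suc.prems
    by (simp add: log_slope_sum_Suc algebra_simps)
  finally show ?case .
qed simp

lemma funpow_in_dyadic_interval:
  assumes "dyadic_pl g N" "x \<in> circle" "\<forall>i<n. N \<le> L - log_slope_sum g N x i"
    and "w \<in> dyadic_interval L x"
  shows "(g ^^ n) w \<in> dyadic_interval (L - log_slope_sum g N x n) ((g ^^ n) x)"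
  using funpow_image_dyadic_interval[OF assms(1-3)] assms(4) by blast

lemma log_slope_sum_eq_on_dyadic_interval:
  assumes G: "dyadic_pl g N" and x: "x \<in> circle"
    and levels: "\<forall>i<n. N \<le> L - log_slope_sum g N x i" and w: "w \<in> dyadic_interval L x"
  shows "log_slope_sum g N w n = log_slope_sum g N x n"
  using levels
proof (induction n)
  case (Suc n)
  have "(g ^^ n) w \<in> dyadic_interval (L - log_slope_sum g N x n) ((g ^^ n) x)"
    using funpow_in_dyadic_interval[OF G x _ w] Suc.prems by simp
  moreover have "N \<le> L - log_slope_sum g N x n"
    using Suc.prems by simp
  ultimately have "(g ^^ n) w \<in> dyadic_interval N ((g ^^ n) x)"
    using dyadic_interval_antimono by blast
  then show ?case
    using Suc by (simp add: log_slope_sum_Suc log_slope_eq)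
qed simp

lemma funpow_affine_on_dyadic_interval:
  assumes G: "dyadic_pl g N" and x: "x \<in> circle"
    and levels: "\<forall>i<n. N \<le> L - log_slope_sum g N x i"
  shows "\<exists>c. \<forall>w\<in>dyadic_interval L x. (g ^^ n) w = pow2 (log_slope_sum g N x n) * w + c"
  using levels
proof (induction n)
  case (Suc n)
  define y where "y = (g ^^ n) x"
  define L' where "L' = L - log_slope_sum g N x n"
  obtain c where c: "\<forall>w\<in>dyadic_interval L x. (g ^^ n) w = pow2 (log_slope_sum g N x n) * w + c"
    using Suc by auto
  obtain c' where c': "\<forall>w\<in>dyadic_interval L' y. g w = pow2 (log_slope g N y) * w + c'"
    using affine_on_dyadic_interval[OF G dyadic_pl_funpow_in_circle[OF G x], of L' n] Suc.prems
    unfolding y_def L'_def by auto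
  have slope: "pow2 (log_slope_sum g N x (Suc n)) =
      pow2 (log_slope g N y) * pow2 (log_slope_sum g N x n)"
    using pow2_add by (simp add: log_slope_sum_Suc y_def mult.commute)
  have "(g ^^ Suc n) w =
      pow2 (log_slope_sum g N x (Suc n)) * w + (pow2 (log_slope g N y) * c + c')"
    if w: "w \<in> dyadic_interval L x" for w
  proof -
    have "(g ^^ n) w \<in> dyadic_interval L' y"
      using funpow_in_dyadic_interval[OF G x _ w] Suc.prems unfolding L'_def y_def by simp
    then have "(g ^^ Suc n) w = pow2 (log_slope g N y) * (pow2 (log_slope_sum g N x n) * w + c) + c'"
      using c c' w by simp
    then show ?thesis
      using slope by (simp add: distrib_left)
  qed
  then show ?case
    by blast
qed simp

section \<open>Wandering dyadic intervals from contractions\<close>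

definition forward_wandering :: "('a \<Rightarrow> 'a) \<Rightarrow> 'a set \<Rightarrow> bool" where
  "forward_wandering g B \<longleftrightarrow> (\<forall>n\<ge>1. (g ^^ n) ` B \<inter> B = {})"

lemma forward_wandering_subset:
  "forward_wandering g B \<Longrightarrow> U \<subseteq> B \<Longrightarrow> forward_wandering g U"
  unfolding forward_wandering_def by blast

lemma funpow_mult_image_subset:
  assumes "(f ^^ n) ` B \<subseteq> B"
  shows "(f ^^ (n * m)) ` B \<subseteq> B"
proof (induction m)
  case (Suc m)
  have "(f ^^ (n * Suc m)) ` B = (f ^^ (n * m)) ` (f ^^ n) ` B"
    unfolding mult_Suc_right add.commute[of n] funpow_add by (simp add: image_comp)
  also have "\<dots> \<subseteq> (f ^^ (n * m)) ` B"
    using assms by (rule image_mono)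
  finally show ?case
    using Suc.IH by simp
qed simp

lemma funpow_mult_image_supset:
  assumes "B \<subseteq> (f ^^ n) ` B"
  shows "B \<subseteq> (f ^^ (n * m)) ` B"
proof (induction m)
  case (Suc m)
  have "(f ^^ (n * m)) ` B \<subseteq> (f ^^ (n * m)) ` (f ^^ n) ` B"
    using assms by (rule image_mono)
  also have "\<dots> = (f ^^ (n * Suc m)) ` B"
    unfolding mult_Suc_right add.commute[of n] funpow_add by (simp add: image_comp)
  finally show ?case
    using Suc.IH by simp
qed simp

text \<open>An image nested with \<open>B\<close> stays nested when iterated, so it cannot meet \<open>B\<close> if some
  multiple of \<open>p\<close> moves \<open>B\<close> off itself.\<close>
lemma forward_wanderingI_nested_or_disjoint:
  assumes ne: "B \<noteq> {}" and p: "1 \<le> p"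
    and multiples: "\<forall>q\<ge>1. (g ^^ (p * q)) ` B \<inter> B = {}"
    and nested: "\<forall>n. (g ^^ n) ` B \<inter> B \<noteq> {} \<longrightarrow> (g ^^ n) ` B \<subseteq> B \<or> B \<subseteq> (g ^^ n) ` B"
  shows "forward_wandering g B"
  unfolding forward_wandering_def
proof (intro allI impI)
  fix n :: nat assume n: "1 \<le> n"
  have disj: "(g ^^ (n * p)) ` B \<inter> B = {}"
    using multiples[rule_format, of n] n by (simp add: mult.commute)
  show "(g ^^ n) ` B \<inter> B = {}"
  proof (rule ccontr)
    assume "(g ^^ n) ` B \<inter> B \<noteq> {}"
    then have "(g ^^ n) ` B \<subseteq> B \<or> B \<subseteq> (g ^^ n) ` B"
      using nested[rule_format] by simp
    then show False
    proof
      assume "(g ^^ n) ` B \<subseteq> B"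
      then have "(g ^^ (n * p)) ` B \<subseteq> B"
        by (rule funpow_mult_image_subset)
      then show False
        using disj ne by blast
    next
      assume "B \<subseteq> (g ^^ n) ` B"
      then have "B \<subseteq> (g ^^ (n * p)) ` B"
        by (rule funpow_mult_image_supset)
      then show False
        using disj ne by blast
    qed
  qed
qed

lemma contracting_return_trap:
  assumes G: "dyadic_pl g N" and y: "y \<in> circle"
    and nonpos: "\<forall>i\<le>p. log_slope_sum g N y i \<le> 0" and neg: "log_slope_sum g N y p < 0"
    and ret: "(g ^^ p) y \<in> dyadic_interval N y"
  shows "(g ^^ p) ` dyadic_interval N y \<subseteq> dyadic_interval (N + 1) ((g ^^ p) y)"
    and "dyadic_interval (N + 1) ((g ^^ p) y) \<subseteq> dyadic_interval N y"
proof -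
  have "\<forall>i<p. N \<le> N - log_slope_sum g N y i"
    using nonpos by simp
  then have "(g ^^ p) ` dyadic_interval N y =
      dyadic_interval (N - log_slope_sum g N y p) ((g ^^ p) y)"
    by (rule funpow_image_dyadic_interval[OF G y])
  moreover have "N + 1 \<le> N - log_slope_sum g N y p"
    using neg by simp
  ultimately show "(g ^^ p) ` dyadic_interval N y \<subseteq> dyadic_interval (N + 1) ((g ^^ p) y)"
    using dyadic_interval_antimono by simp
  have "dyadic_interval (N + 1) ((g ^^ p) y) \<subseteq> dyadic_interval N ((g ^^ p) y)"
    by (rule dyadic_interval_antimono) simp
  then show "dyadic_interval (N + 1) ((g ^^ p) y) \<subseteq> dyadic_interval N y"
    by (simp only: dyadic_interval_eq[OF ret])
qed

lemma log_slope_sum_nonpos_in_trap: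
  assumes G: "dyadic_pl g N" and y: "y \<in> circle"
    and nonpos: "\<forall>i\<le>p. log_slope_sum g N y i \<le> 0" and neg: "log_slope_sum g N y p < 0"
    and ret: "(g ^^ p) y \<in> dyadic_interval N y"
  shows "\<forall>w\<in>dyadic_interval N y. log_slope_sum g N w n \<le> 0"
proof (induction n rule: less_induct)
  case (less n)
  have init: "log_slope_sum g N w i \<le> 0" if "w \<in> dyadic_interval N y" "i \<le> p" for w i
  proof -
    have "\<forall>j<i. N \<le> N - log_slope_sum g N y j"
      using nonpos \<open>i \<le> p\<close> by simp
    then show ?thesis
      using log_slope_sum_eq_on_dyadic_interval[OF G y _ that(1)] nonpos \<open>i \<le> p\<close> by simp
  qed
  have "0 < p"
    using neg by (cases p) auto
  show ?case
  proof
    fix w assume w: "w \<in> dyadic_interval N y"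
    show "log_slope_sum g N w n \<le> 0"
    proof (cases "n \<le> p")
      case True
      then show ?thesis
        using init[OF w] by simp
    next
      case False
      define m where "m = n - p"
      have m: "n = p + m" "m < n"
        using False \<open>0 < p\<close> by (simp_all add: m_def)
      have "(g ^^ p) w \<in> dyadic_interval N y"
        using contracting_return_trap[OF G y nonpos neg ret] w by blast
      then have "log_slope_sum g N ((g ^^ p) w) m \<le> 0"
        using less.IH[OF m(2)] by blast
      moreover have "log_slope_sum g N w p \<le> 0"
        using init[OF w order_refl] .
      ultimately show ?thesis
        using log_slope_sum_add[of g N w p m] m(1) by simp
    qed
  qed
qed

lemma forward_images_nested_or_disjoint:
  assumes G: "dyadic_pl g N" and z: "z \<in> circle" and nonpos: "\<forall>i. log_slope_sum g N z i \<le> 0"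
  shows "\<forall>n. (g ^^ n) ` dyadic_interval (N + 1) z \<inter> dyadic_interval (N + 1) z \<noteq> {} \<longrightarrow>
    (g ^^ n) ` dyadic_interval (N + 1) z \<subseteq> dyadic_interval (N + 1) z \<or>
    dyadic_interval (N + 1) z \<subseteq> (g ^^ n) ` dyadic_interval (N + 1) z"
proof -
  have levels: "N \<le> N + 1 - log_slope_sum g N z i" for i
    using nonpos[rule_format, of i] by linarith
  have "(g ^^ n) ` dyadic_interval (N + 1) z =
      dyadic_interval (N + 1 - log_slope_sum g N z n) ((g ^^ n) z)" for n
    by (rule funpow_image_dyadic_interval[OF G z]) (use levels in blast)
  then show ?thesis
    using dyadic_intervals_nested_or_disjoint by simp
qed

text \<open>The contraction maps \<open>Q = dyadic_interval N y\<close> into one half of itself; the other half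
  wanders, because all its forward images are dyadic intervals.\<close>
lemma forward_wandering_of_contracting_return:
  assumes G: "dyadic_pl g N" and y: "y \<in> circle"
    and nonpos: "\<forall>i\<le>p. log_slope_sum g N y i \<le> 0" and neg: "log_slope_sum g N y p < 0"
    and ret: "(g ^^ p) y \<in> dyadic_interval N y"
  shows "\<exists>z\<in>circle. forward_wandering g (dyadic_interval (N + 1) z)"
proof -
  define Q where "Q = dyadic_interval N y"
  define w where "w = (g ^^ p) y"
  note trap = contracting_return_trap[OF G y nonpos neg ret, folded Q_def w_def]
  note Q_nonpos = log_slope_sum_nonpos_in_trap[OF G y nonpos neg ret, folded Q_def]
  obtain z where z: "z \<in> Q"
    and avoid: "dyadic_interval (N + 1) z \<inter> dyadic_interval (N + 1) w = {}"
    using dyadic_interval_avoiding_half unfolding Q_def by blast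
  define B where "B = dyadic_interval (N + 1) z"
  have "Q \<subseteq> circle"
    unfolding Q_def using dyadic_interval_subset_circle[OF y dyadic_pl_level_nonneg[OF G]] .
  then have zc: "z \<in> circle"
    using z by blast
  have BQ: "B \<subseteq> Q"
    unfolding B_def Q_def using dyadic_interval_subset[of N "N + 1" z] z Q_def by simp
  have multiples: "\<forall>q\<ge>1. (g ^^ (p * q)) ` B \<inter> B = {}"
  proof (intro allI impI)
    fix q :: nat assume "1 \<le> q"
    then have "p * q = p + p * (q - 1)"
      by (simp add: algebra_simps)
    then have "(g ^^ (p * q)) ` B \<subseteq> (g ^^ p) ` (g ^^ (p * (q - 1))) ` Q"
      using BQ by (simp add: funpow_add image_comp image_mono)
    also have "\<dots> \<subseteq> (g ^^ p) ` Q"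
      using trap by (intro image_mono funpow_mult_image_subset) blast
    finally show "(g ^^ (p * q)) ` B \<inter> B = {}"
      using trap avoid B_def by blast
  qed
  have "\<forall>i. log_slope_sum g N z i \<le> 0"
    using Q_nonpos z by blast
  note nested = forward_images_nested_or_disjoint[OF G zc this, folded B_def]
  have "forward_wandering g B"
  proof (rule forward_wanderingI_nested_or_disjoint)
    show "B \<noteq> {}"
      unfolding B_def using dyadic_interval_self by blast
    show "1 \<le> p"
      using neg by (cases p) auto
  qed (fact multiples nested)+
  then show ?thesis
    using zc B_def by blast
qed

section \<open>Long descents of the slope exponents\<close>

lemma pigeonhole_pair:
  assumes "finite C" "card C \<le> n" "\<forall>i\<le>n. f i \<in> C"
  obtains i j where "i < j" "j \<le> n" "f i = f j"
proof -
  have "f ` {0..n} \<subseteq> C"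
    using assms(3) by auto
  then have "card (f ` {0..n}) \<le> card C"
    by (rule card_mono[OF assms(1)])
  also have "\<dots> < card {0..n}"
    using assms(2) by simp
  finally have "\<not> inj_on f {0..n}"
    by (rule pigeonhole)
  then obtain i j where ij: "i \<le> n" "j \<le> n" "i \<noteq> j" "f i = f j"
    unfolding inj_on_def by auto
  show ?thesis
  proof (cases "i < j")
    case True
    then show ?thesis
      using that[of i j] ij by simp
  next
    case False
    then show ?thesis
      using that[of j i] ij by simp
  qed
qed

definition last_above :: "(nat \<Rightarrow> int) \<Rightarrow> nat \<Rightarrow> int \<Rightarrow> nat" where
  "last_above f t \<theta> = Max {v \<in> {0..t}. \<theta> \<le> f v}"

lemma last_above:
  fixes f :: "nat \<Rightarrow> int"
  assumes "f 0 = 0" and steps: "\<forall>i. f i - f (Suc i) < K" and "f t < \<theta>" "\<theta> \<le> 0"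
  shows "last_above f t \<theta> < t" "\<theta> \<le> f (last_above f t \<theta>)" "f (last_above f t \<theta>) < \<theta> + K"
    and "\<And>v. last_above f t \<theta> < v \<Longrightarrow> v \<le> t \<Longrightarrow> f v < \<theta>"
proof -
  define S where "S = {v \<in> {0..t}. \<theta> \<le> f v}"
  define u where "u = last_above f t \<theta>"
  have "finite S" "0 \<in> S"
    using assms by (auto simp: S_def)
  then have "u \<in> S" and above: "\<And>v. v \<in> S \<Longrightarrow> v \<le> u"
    unfolding u_def last_above_def S_def[symmetric] using Max_in Max_ge by blast+
  then have u: "u \<le> t" "\<theta> \<le> f u"
    by (auto simp: S_def)
  then show "u < t" "\<theta> \<le> f u"
    using \<open>f t < \<theta>\<close> by (auto simp: order.order_iff_strict)
  show after: "f v < \<theta>" if "u < v" "v \<le> t" for v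
  proof (rule ccontr)
    assume "\<not> f v < \<theta>"
    then have "v \<in> S"
      using that by (simp add: S_def)
    then show False
      using above that by fastforce
  qed
  have "f (Suc u) < \<theta>"
    using after \<open>u < t\<close> by simp
  then show "f u < \<theta> + K"
    using steps[rule_format, of u] by linarith
qed

lemma last_above_strict_antimono:
  fixes f :: "nat \<Rightarrow> int"
  assumes "f 0 = 0" and steps: "\<forall>i. f i - f (Suc i) < K"
    and "f t < \<theta>" "\<theta> + K \<le> \<theta>'" "\<theta>' \<le> 0" "0 \<le> K"
  shows "last_above f t \<theta>' < last_above f t \<theta>"
proof (rule ccontr)
  note low = last_above[OF assms(1,2), of t \<theta>] and high = last_above[OF assms(1,2), of t \<theta>']
  assume "\<not> last_above f t \<theta>' < last_above f t \<theta>"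
  moreover have "f (last_above f t \<theta>) < f (last_above f t \<theta>')"
    using low(3) high(2) assms(3-6) by simp
  ultimately have "last_above f t \<theta> < last_above f t \<theta>'"
    by (cases "last_above f t \<theta> = last_above f t \<theta>'") auto
  then have "f (last_above f t \<theta>') < \<theta>"
    using low(4) high(1) assms(3-6) by simp
  then show False
    using high(2) assms(3-6) by simp
qed

text \<open>Thresholds spaced \<open>K\<close> apart, \<open>card C + 1\<close> of them, fit between the start and the end
  of the descent; two of the times at which \<open>f\<close> is last above a threshold share a colour.\<close>
lemma descent_with_repeated_colour:
  fixes f :: "nat \<Rightarrow> int" and colour :: "nat \<Rightarrow> 'a"
  assumes f0: "f 0 = 0" and steps: "\<forall>i. f i - f (Suc i) < K" and "0 \<le> K"
    and C: "finite C" "range colour \<subseteq> C" and drop: "f t < - (K * int (card C))"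
  obtains u p where "0 < p" "colour (u + p) = colour u" "\<forall>i. 0 < i \<and> i \<le> p \<longrightarrow> f (u + i) < f u"
proof -
  define \<theta> where "\<theta> j = f t + 1 + int j * K" for j :: nat
  define last where "last j = last_above f t (\<theta> j)" for j
  have \<theta>_range: "f t < \<theta> j" "\<theta> j \<le> 0" if "j \<le> card C" for j
  proof -
    have "0 \<le> int j * K" "int j * K \<le> int (card C) * K"
      using that \<open>0 \<le> K\<close> by (simp_all add: mult_right_mono)
    then show "f t < \<theta> j" "\<theta> j \<le> 0"
      using drop by (simp_all add: \<theta>_def algebra_simps)
  qed
  have last: "last j < t" "\<theta> j \<le> f (last j)" "\<And>v. last j < v \<Longrightarrow> v \<le> t \<Longrightarrow> f v < \<theta> j"
    if "j \<le> card C" for j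
    unfolding last_def using last_above[OF f0 steps \<theta>_range[OF that]] by blast+
  have "\<forall>i\<le>card C. (colour \<circ> last) i \<in> C"
    using C(2) by auto
  then obtain a b where ab: "a < b" "b \<le> card C" "(colour \<circ> last) a = (colour \<circ> last) b"
    by (rule pigeonhole_pair[OF C(1) order_refl])
  have "\<theta> a + K \<le> \<theta> b"
  proof -
    have "(int a + 1) * K \<le> int b * K"
      using ab(1) \<open>0 \<le> K\<close> by (intro mult_right_mono) auto
    then show ?thesis
      by (simp add: \<theta>_def algebra_simps)
  qed
  then have "last b < last a"
    unfolding last_def using \<theta>_range ab(1,2) \<open>0 \<le> K\<close>
    by (intro last_above_strict_antimono[OF f0 steps]) auto
  show ?thesis
  proof (rule that)
    show "0 < last a - last b"
      using \<open>last b < last a\<close> by simp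
    show "colour (last b + (last a - last b)) = colour (last b)"
      using \<open>last b < last a\<close> ab(3) by (simp add: comp_def)
    show "\<forall>i. 0 < i \<and> i \<le> last a - last b \<longrightarrow> f (last b + i) < f (last b)"
    proof (intro allI impI)
      fix i assume "0 < i \<and> i \<le> last a - last b"
      then have "last b < last b + i" "last b + i \<le> t"
        using last(1)[of a] ab(1,2) by auto
      then have "f (last b + i) < \<theta> b"
        by (rule last(3)[OF ab(2)])
      then show "f (last b + i) < f (last b)"
        using last(2)[OF ab(2)] by simp
    qed
  qed
qed

lemma log_slope_bounded:
  assumes G: "dyadic_pl g N"
  obtains K where "\<forall>y\<in>circle. \<bar>log_slope g N y\<bar> < K"
proof -
  define R where "R = (\<lambda>j. log_slope g N (of_int j / pow2 N)) ` {1 .. 2 ^ nat N}"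
  have in_R: "log_slope g N y \<in> R" if "y \<in> circle" for y
  proof -
    define j where "j = \<lceil>y * pow2 N\<rceil>"
    have "of_int j / pow2 N \<in> dyadic_interval N y"
      by (simp add: dyadic_interval_def j_def)
    then have "log_slope g N y = log_slope g N (of_int j / pow2 N)"
      by (simp add: log_slope_eq)
    moreover have "j \<in> {1 .. 2 ^ nat N}"
      unfolding j_def using ceiling_scaled_circle[OF that dyadic_pl_level_nonneg[OF G]] .
    ultimately show ?thesis
      unfolding R_def by (rule image_eqI)
  qed
  have "finite (abs ` R)"
    unfolding R_def by simp
  then have "\<bar>log_slope g N y\<bar> < Max (abs ` R) + 1" if "y \<in> circle" for y
    using Max_ge[of "abs ` R" "\<bar>log_slope g N y\<bar>"] in_R[OF that] by simp
  then show ?thesis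
    using that by blast
qed

lemma contracting_return_of_descent:
  assumes G: "dyadic_pl g N" and K: "\<forall>y\<in>circle. \<bar>log_slope g N y\<bar> < K"
    and x: "x \<in> circle" and drop: "log_slope_sum g N x t < - (K * 2 ^ nat N)"
  obtains y p where "y \<in> circle" "\<forall>i\<le>p. log_slope_sum g N y i \<le> 0"
    "log_slope_sum g N y p < 0" "(g ^^ p) y \<in> dyadic_interval N y"
proof -
  define f where "f = log_slope_sum g N x"
  define colour where "colour i = \<lceil>(g ^^ i) x * pow2 N\<rceil>" for i
  have orbit: "(g ^^ i) x \<in> circle" for i
    using dyadic_pl_funpow_in_circle[OF G x] .
  have f0: "f 0 = 0"
    by (simp add: f_def)
  have steps: "\<forall>i. f i - f (Suc i) < K"
    using K orbit by (auto simp: f_def log_slope_sum_Suc abs_less_iff)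
  have "0 \<le> K"
    using bound_on_circle_pos[OF K] by simp
  have colours: "range colour \<subseteq> {1 .. 2 ^ nat N}"
    using ceiling_scaled_circle[OF orbit dyadic_pl_level_nonneg[OF G]] by (auto simp: colour_def)
  have "int (card {1 .. (2::int) ^ nat N}) = 2 ^ nat N"
    by simp
  then have "f t < - (K * int (card {1 .. (2::int) ^ nat N}))"
    using drop by (simp add: f_def)
  then obtain u p where p: "0 < p" and ret: "colour (u + p) = colour u"
    and below: "\<forall>i. 0 < i \<and> i \<le> p \<longrightarrow> f (u + i) < f u"
    by (rule descent_with_repeated_colour[OF f0 steps \<open>0 \<le> K\<close> finite_atLeastAtMost_int colours])
  define y where "y = (g ^^ u) x"
  have shift: "log_slope_sum g N y i = f (u + i) - f u" for i
    using log_slope_sum_add[of g N x u i] by (simp add: f_def y_def)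
  show ?thesis
  proof (rule that)
    show "y \<in> circle"
      unfolding y_def by (rule orbit)
    show "\<forall>i\<le>p. log_slope_sum g N y i \<le> 0"
    proof (intro allI impI)
      fix i assume "i \<le> p"
      then show "log_slope_sum g N y i \<le> 0"
        using below[rule_format, of i] by (cases "i = 0") (simp_all add: shift)
    qed
    show "log_slope_sum g N y p < 0"
      using below p by (simp add: shift)
    have "(g ^^ p) y = (g ^^ (u + p)) x"
      by (simp add: y_def funpow_add add.commute)
    then show "(g ^^ p) y \<in> dyadic_interval N y"
      using ret by (simp add: dyadic_interval_def colour_def y_def)
  qed
qed

lemma forward_wandering_of_unbounded_descent:
  assumes G: "dyadic_pl g N"
    and unbounded: "\<forall>B. \<exists>x\<in>circle. \<exists>t. log_slope_sum g N x t < B"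
  shows "\<exists>z\<in>circle. forward_wandering g (dyadic_interval (N + 1) z)"
proof -
  obtain K where K: "\<forall>y\<in>circle. \<bar>log_slope g N y\<bar> < K"
    using log_slope_bounded[OF G] by blast
  obtain x t where "x \<in> circle" "log_slope_sum g N x t < - (K * 2 ^ nat N)"
    using unbounded by blast
  then obtain y p where "y \<in> circle" "\<forall>i\<le>p. log_slope_sum g N y i \<le> 0"
    "log_slope_sum g N y p < 0" "(g ^^ p) y \<in> dyadic_interval N y"
    by (rule contracting_return_of_descent[OF G K])
  then show ?thesis
    by (rule forward_wandering_of_contracting_return[OF G])
qed

section \<open>Bounded slope exponents force periodicity\<close>

lemma affine_image_eq_imp_offset_eq:
  fixes a c1 c2 t :: real
  assumes images: "(\<lambda>w. a * w + c1) ` J = (\<lambda>w. a * w + c2) ` J" and "0 < a"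
    and t: "t \<in> J" "\<forall>w\<in>J. w \<le> t"
  shows "c1 = c2"
proof -
  have le: "c1 \<le> c2" if "(\<lambda>w. a * w + c1) ` J = (\<lambda>w. a * w + c2) ` J" for c1 c2
  proof -
    have "a * t + c1 \<in> (\<lambda>w. a * w + c2) ` J"
      using that t(1) by blast
    then obtain w where w: "w \<in> J" "a * t + c1 = a * w + c2"
      by blast
    have "a * w \<le> a * t"
      using t(2) w(1) \<open>0 < a\<close> by simp
    then show ?thesis
      using w(2) by simp
  qed
  show ?thesis
    using le[OF images] le[OF images[symmetric]] by simp
qed

lemma funpow_eq_of_same_image:
  assumes G: "dyadic_pl g N" and x: "x \<in> circle"
    and levels: "\<forall>i<d. N \<le> L - log_slope_sum g N x i" and "c \<le> d"
    and slope: "log_slope_sum g N x c = log_slope_sum g N x d"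
    and image: "(g ^^ c) ` dyadic_interval L x = (g ^^ d) ` dyadic_interval L x"
  shows "(g ^^ c) x = (g ^^ d) x"
proof -
  obtain c1 where c1: "\<forall>w\<in>dyadic_interval L x. (g ^^ c) w = pow2 (log_slope_sum g N x d) * w + c1"
    using funpow_affine_on_dyadic_interval[OF G x, of c L] levels \<open>c \<le> d\<close> slope by auto
  obtain c2 where c2: "\<forall>w\<in>dyadic_interval L x. (g ^^ d) w = pow2 (log_slope_sum g N x d) * w + c2"
    using funpow_affine_on_dyadic_interval[OF G x, of d L] levels by auto
  have "(\<lambda>w. pow2 (log_slope_sum g N x d) * w + c1) ` dyadic_interval L x =
      (\<lambda>w. pow2 (log_slope_sum g N x d) * w + c2) ` dyadic_interval L x"
    using image c1 c2 by (simp cong: image_cong)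
  then have "c1 = c2"
    using dyadic_interval_right_end[where x = x and l = L]
    by (intro affine_image_eq_imp_offset_eq[where t = "of_int \<lceil>x * pow2 L\<rceil> / pow2 L"]) auto
  then show ?thesis
    using c1 c2 by simp
qed

lemma common_period:
  assumes "\<forall>x\<in>S. \<exists>q. 0 < q \<and> q \<le> P \<and> (f ^^ q) x = x"
  shows "\<forall>x\<in>S. (f ^^ fact P) x = x"
proof
  fix x assume "x \<in> S"
  then obtain q where q: "0 < q" "q \<le> P" "(f ^^ q) x = x"
    using assms by blast
  then have "fact P mod q = 0"
    by (simp add: dvd_fact)
  then show "(f ^^ fact P) x = x"
    using funpow_mod_eq[OF q(3), of "fact P"] by simp
qed

lemma dyadic_pl_funpow_cancel:
  assumes G: "dyadic_pl g N" and x: "x \<in> circle"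
    and "c < d" and eq: "(g ^^ c) x = (g ^^ d) x"
  shows "(g ^^ (d - c)) x = x"
proof -
  have "(g ^^ d) x = (g ^^ c) ((g ^^ (d - c)) x)"
    using \<open>c < d\<close> by (metis funpow_add le_add_diff_inverse less_imp_le o_apply)
  then have "(g ^^ c) ((g ^^ (d - c)) x) = (g ^^ c) x"
    using eq by simp
  moreover have "inj_on (g ^^ c) circle"
    using bij_betw_funpow[OF dyadic_pl_bij[OF G]] by (rule bij_betw_imp_inj_on)
  ultimately show ?thesis
    using x dyadic_pl_funpow_in_circle[OF G x] by (auto dest: inj_onD)
qed

text \<open>With bounded slopes the pair (level, position) of the dyadic interval
  \<open>(g ^^ n) ` dyadic_interval L x\<close> takes finitely many values, so it repeats; a repeat
  forces a return of \<open>x\<close>.\<close>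
lemma return_of_bounded_log_slope_sums:
  assumes G: "dyadic_pl g N" and x: "x \<in> circle"
    and bounded: "\<forall>n. B1 \<le> log_slope_sum g N x n \<and> log_slope_sum g N x n \<le> B2"
  defines "T \<equiv> {N .. N + B2 - B1} \<times> {1 .. (2::int) ^ nat (N + B2 - B1)}"
  shows "\<exists>q. 0 < q \<and> q \<le> card T \<and> (g ^^ q) x = x"
proof -
  define L where "L = N + B2"
  define lev where "lev n = L - log_slope_sum g N x n" for n
  define pos where "pos n = \<lceil>(g ^^ n) x * pow2 (lev n)\<rceil>" for n
  have levels: "\<forall>i<n. N \<le> lev i" for n
    using bounded by (auto simp: lev_def L_def)
  have "(lev n, pos n) \<in> T" for n
  proof -
    have lev: "N \<le> lev n" "lev n \<le> N + B2 - B1"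
      using bounded by (auto simp: lev_def L_def)
    then have "pos n \<in> {1 .. 2 ^ nat (lev n)}"
      unfolding pos_def
      using ceiling_scaled_circle[OF dyadic_pl_funpow_in_circle[OF G x]] dyadic_pl_level_nonneg[OF G]
      by simp
    moreover have "(2::int) ^ nat (lev n) \<le> 2 ^ nat (N + B2 - B1)"
      using lev dyadic_pl_level_nonneg[OF G] by (intro power_increasing) auto
    ultimately have "pos n \<in> {1 .. 2 ^ nat (N + B2 - B1)}"
      by (meson atLeastAtMost_iff order_trans)
    then show ?thesis
      using lev by (simp add: T_def)
  qed
  then obtain c d where cd: "c < d" "d \<le> card T" "(lev c, pos c) = (lev d, pos d)"
    using pigeonhole_pair[OF _ order_refl, of T "\<lambda>n. (lev n, pos n)"] by (auto simp: T_def)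
  have image: "(g ^^ n) ` dyadic_interval L x = dyadic_interval (lev n) ((g ^^ n) x)" for n
    unfolding lev_def using funpow_image_dyadic_interval[OF G x] levels lev_def by simp
  have "lev c = lev d" "pos c = pos d"
    using cd(3) by simp_all
  then have same_image: "(g ^^ c) ` dyadic_interval L x = (g ^^ d) ` dyadic_interval L x"
    unfolding image unfolding dyadic_interval_def pos_def by simp
  have same_slope: "log_slope_sum g N x c = log_slope_sum g N x d"
    using cd(3) by (simp add: lev_def)
  have "(g ^^ c) x = (g ^^ d) x"
    using levels[unfolded lev_def] less_imp_le[OF cd(1)] same_slope same_image
    by (rule funpow_eq_of_same_image[OF G x])
  then have "(g ^^ (d - c)) x = x"
    by (rule dyadic_pl_funpow_cancel[OF G x cd(1)])
  then show ?thesis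
    using cd(1,2) by (intro exI[of _ "d - c"]) simp
qed

lemma periodic_of_bounded_log_slope_sums:
  assumes G: "dyadic_pl g N"
    and bounded: "\<forall>x\<in>circle. \<forall>n. B1 \<le> log_slope_sum g N x n \<and> log_slope_sum g N x n \<le> B2"
  shows "\<exists>P>0. \<forall>x\<in>circle. (g ^^ P) x = x"
proof -
  define T where "T = {N .. N + B2 - B1} \<times> {1 .. (2::int) ^ nat (N + B2 - B1)}"
  have "\<forall>x\<in>circle. \<exists>q. 0 < q \<and> q \<le> card T \<and> (g ^^ q) x = x"
    unfolding T_def using return_of_bounded_log_slope_sums[OF G] bounded by blast
  then have "\<forall>x\<in>circle. (g ^^ fact (card T)) x = x"
    by (rule common_period)
  then show ?thesis
    by (intro exI[of _ "fact (card T)"]) simp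
qed

section \<open>Inverses\<close>

context
  fixes g :: "real \<Rightarrow> real"
  assumes bij: "bij_betw g circle circle"
begin

lemma vinv_in_circle: "z \<in> circle \<Longrightarrow> vinv g z \<in> circle"
  unfolding vinv_def using bij by (simp add: bij_betw_def inv_into_into)

lemma vinv_right: "z \<in> circle \<Longrightarrow> g (vinv g z) = z"
  unfolding vinv_def using bij by (simp add: bij_betw_def f_inv_into_f)

lemma vinv_left: "v \<in> circle \<Longrightarrow> vinv g (g v) = v"
  unfolding vinv_def using bij by (simp add: bij_betw_def bij_betwE)

lemma bij_betw_vinv: "bij_betw (vinv g) circle circle"
  using bij_betw_inv_into[OF bij] by (rule bij_betw_cong[THEN iffD1, rotated]) (simp add: vinv_def)

lemma funpow_vinv_left: "u \<in> circle \<Longrightarrow> (vinv g ^^ n) ((g ^^ n) u) = u"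
proof (induction n arbitrary: u)
  case (Suc n)
  have "(g ^^ n) u \<in> circle"
    using bij_betwE[OF bij_betw_funpow[OF bij]] Suc.prems by blast
  have "(vinv g ^^ Suc n) ((g ^^ Suc n) u) = (vinv g ^^ n) (vinv g ((g ^^ Suc n) u))"
    by (simp only: funpow_Suc_right o_apply)
  also have "(g ^^ Suc n) u = g ((g ^^ n) u)"
    by simp
  also have "vinv g (g ((g ^^ n) u)) = (g ^^ n) u"
    using \<open>(g ^^ n) u \<in> circle\<close> by (rule vinv_left)
  finally show ?case
    using Suc by simp
qed simp

lemma funpow_vinv_right: "u \<in> circle \<Longrightarrow> (g ^^ n) ((vinv g ^^ n) u) = u"
proof (induction n arbitrary: u)
  case (Suc n)
  have "(vinv g ^^ n) u \<in> circle"
    using bij_betwE[OF bij_betw_funpow[OF bij_betw_vinv]] Suc.prems by blast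
  have "(g ^^ Suc n) ((vinv g ^^ Suc n) u) = (g ^^ n) (g ((vinv g ^^ Suc n) u))"
    by (simp only: funpow_Suc_right o_apply)
  also have "(vinv g ^^ Suc n) u = vinv g ((vinv g ^^ n) u)"
    by simp
  also have "g (vinv g ((vinv g ^^ n) u)) = (vinv g ^^ n) u"
    using \<open>(vinv g ^^ n) u \<in> circle\<close> by (rule vinv_right)
  finally show ?case
    using Suc by simp
qed simp

lemma forward_wandering_of_vinv:
  assumes "B \<subseteq> circle" and W: "forward_wandering (vinv g) B"
  shows "forward_wandering g B"
  unfolding forward_wandering_def
proof (intro allI impI)
  fix n :: nat assume n: "1 \<le> n"
  show "(g ^^ n) ` B \<inter> B = {}"
  proof (rule ccontr)
    assume "(g ^^ n) ` B \<inter> B \<noteq> {}"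
    then obtain u where u: "u \<in> B" "(g ^^ n) u \<in> B"
      by blast
    then have "u \<in> (vinv g ^^ n) ` B \<inter> B"
      using funpow_vinv_left[of u n] assms(1) by (metis IntI imageI subsetD)
    then show False
      using W n unfolding forward_wandering_def by blast
  qed
qed

lemma wandering_of_forward_wandering:
  assumes "U \<subseteq> circle" and W: "forward_wandering g U"
  shows "wandering g U"
  unfolding wandering_def
proof (intro allI impI)
  fix n :: int assume "vpow g n \<noteq> id"
  then have "n \<noteq> 0"
    by (auto simp: vpow_def)
  show "vpow g n ` U \<inter> U = {}"
  proof (cases "0 < n")
    case True
    then show ?thesis
      using W by (simp add: vpow_def forward_wandering_def)
  next
    case False
    define m where "m = nat (- n)"
    have "1 \<le> m" and vpow: "vpow g n = vinv g ^^ m"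
      using False \<open>n \<noteq> 0\<close> by (simp_all add: m_def vpow_def)
    show ?thesis
    proof (rule ccontr)
      assume "vpow g n ` U \<inter> U \<noteq> {}"
      then obtain w where w: "w \<in> U" "(vinv g ^^ m) w \<in> U"
        unfolding vpow by blast
      then have "w \<in> (g ^^ m) ` U"
        using funpow_vinv_right[of w m] assms(1) by (metis imageI subsetD)
      then show False
        using W \<open>1 \<le> m\<close> w(1) unfolding forward_wandering_def by blast
    qed
  qed
qed

end

lemma affine_piece_vinv:
  assumes G: "dyadic_pl g N" and K: "\<forall>y\<in>circle. \<bar>log_slope g N y\<bar> < K" and z: "z \<in> circle"
  shows "\<exists>c. affine_piece (vinv g) (N + K) z (- log_slope g N (vinv g z)) c"
proof -
  note bij = dyadic_pl_bij[OF G]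
  define v where "v = vinv g z"
  define k where "k = log_slope g N v"
  have v: "v \<in> circle" and gv: "g v = z"
    unfolding v_def using vinv_in_circle[OF bij z] vinv_right[OF bij z] by simp_all
  obtain c where "affine_piece g N v k c"
    using affine_piece_log_slope[OF G v] k_def by blast
  then have aff: "\<And>w. w \<in> dyadic_interval N v \<Longrightarrow> g w = pow2 k * w + c"
    and c: "c * pow2 (N - k) \<in> \<int>"
    by (auto simp: affine_piece_def)
  have k: "\<bar>k\<bar> < K"
    using K v k_def by simp
  have "dyadic_interval (N + K) z \<subseteq> dyadic_interval (N - k) z"
    using k by (intro dyadic_interval_antimono) simp
  also have "\<dots> = g ` dyadic_interval N v"
    using image_dyadic_interval[OF G v order_refl] gv k_def by simp
  finally have sub: "dyadic_interval (N + K) z \<subseteq> g ` dyadic_interval N v" .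
  have "vinv g w = pow2 (- k) * w + (- c / pow2 k)" if w: "w \<in> dyadic_interval (N + K) z" for w
  proof -
    obtain u where u: "u \<in> dyadic_interval N v" "w = g u"
      using sub w by blast
    have "u \<in> circle"
      using dyadic_interval_subset_circle[OF v dyadic_pl_level_nonneg[OF G]] u(1) by blast
    then have "vinv g w = u"
      using vinv_left[OF bij] u(2) by simp
    moreover have "w = pow2 k * u + c"
      using aff[OF u(1)] u(2) by simp
    ultimately show ?thesis
      by (simp add: powr_minus field_simps)
  qed
  moreover have "(- c / pow2 k) * pow2 (N + K - - k) \<in> \<int>"
  proof -
    have "c * pow2 (N - k) * pow2 (K + k) \<in> \<int>"
      using k by (intro Ints_mult[OF c] pow2_nonneg_Ints) simp
    moreover have "(- c / pow2 k) * pow2 (N + K - - k) = - (c * pow2 (N - k) * pow2 (K + k))"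
      using pow2_add[of "N + K" k] pow2_add[of "N - k" "K + k"] by (simp add: field_simps)
    ultimately show ?thesis
      by (metis Ints_minus)
  qed
  ultimately show ?thesis
    unfolding affine_piece_def v_def[symmetric] k_def[symmetric] by blast
qed

lemma dyadic_pl_vinv:
  assumes G: "dyadic_pl g N" and K: "\<forall>y\<in>circle. \<bar>log_slope g N y\<bar> < K"
  shows "dyadic_pl (vinv g) (N + K)"
proof -
  have "0 \<le> N + K"
    using bound_on_circle_pos[OF K] dyadic_pl_level_nonneg[OF G] by simp
  moreover have "\<forall>z\<in>circle. \<exists>k c. affine_piece (vinv g) (N + K) z k c"
    using affine_piece_vinv[OF G K] by blast
  ultimately show ?thesis
    unfolding dyadic_pl_def using bij_betw_vinv[OF dyadic_pl_bij[OF G]] by blast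
qed

lemma log_slope_vinv:
  assumes G: "dyadic_pl g N" and K: "\<forall>y\<in>circle. \<bar>log_slope g N y\<bar> < K" and v: "v \<in> circle"
  shows "log_slope (vinv g) (N + K) (g v) = - log_slope g N v"
proof -
  note bij = dyadic_pl_bij[OF G]
  have z: "g v \<in> circle"
    using bij_betwE[OF bij] v by blast
  have v_eq: "vinv g (g v) = v"
    using vinv_left[OF bij v] .
  obtain c1 where c1: "affine_piece (vinv g) (N + K) (g v) (log_slope (vinv g) (N + K) (g v)) c1"
    using affine_piece_log_slope[OF dyadic_pl_vinv[OF G K] z] by blast
  obtain c2 where c2: "affine_piece (vinv g) (N + K) (g v) (- log_slope g N v) c2"
    using affine_piece_vinv[OF G K z] v_eq by auto
  have "\<forall>w\<in>dyadic_interval (N + K) (g v).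
      pow2 (log_slope (vinv g) (N + K) (g v)) * w + c1 = pow2 (- log_slope g N v) * w + c2"
    using c1 c2 unfolding affine_piece_def by simp
  then have "pow2 (log_slope (vinv g) (N + K) (g v)) = pow2 (- log_slope g N v)"
    by (rule affine_eq_on_dyadic_interval_imp_slope_eq)
  then show ?thesis
    by (rule pow2_inj)
qed

lemma log_slope_sum_vinv:
  assumes G: "dyadic_pl g N" and K: "\<forall>y\<in>circle. \<bar>log_slope g N y\<bar> < K" and w: "w \<in> circle"
  shows "log_slope_sum (vinv g) (N + K) ((g ^^ m) w) m = - log_slope_sum g N w m"
proof (induction m)
  case (Suc m)
  note bij = dyadic_pl_bij[OF G]
  have gw: "(g ^^ m) w \<in> circle"
    using dyadic_pl_funpow_in_circle[OF G w] .
  have "log_slope_sum (vinv g) (N + K) ((g ^^ Suc m) w) (Suc m) =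
      log_slope_sum (vinv g) (N + K) ((g ^^ Suc m) w) 1 +
      log_slope_sum (vinv g) (N + K) (vinv g ((g ^^ Suc m) w)) m"
    using log_slope_sum_add[of "vinv g" "N + K" "(g ^^ Suc m) w" 1 m] by simp
  also have "vinv g ((g ^^ Suc m) w) = (g ^^ m) w"
    using vinv_left[OF bij gw] by simp
  also have "log_slope_sum (vinv g) (N + K) ((g ^^ Suc m) w) 1 = - log_slope g N ((g ^^ m) w)"
    using log_slope_vinv[OF G K gw] by (simp add: log_slope_sum_def)
  finally show ?case
    using Suc.IH by (simp add: log_slope_sum_Suc)
qed simp

section \<open>Elements of Thompson's group V\<close>

lemma dyadic_scaled_Ints:
  assumes "dyadic e"
  shows "eventually (\<lambda>m. e * pow2 m \<in> \<int>) at_top"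
proof -
  obtain a :: int and n :: nat where e: "e = of_int a / 2 ^ n"
    using assms by (auto simp: dyadic_def)
  have "e * pow2 m \<in> \<int>" if "int n \<le> m" for m
  proof -
    have "pow2 m = pow2 (m - int n) * 2 ^ n"
      using pow2_add[of "m - int n" "int n"] pow2_nonneg[of "int n"] by simp
    then have "e * pow2 m = of_int a * pow2 (m - int n)"
      by (simp add: e)
    then show ?thesis
      using that pow2_nonneg_Ints[of "m - int n"] by simp
  qed
  then show ?thesis
    by (auto simp: eventually_at_top_linorder)
qed

definition adjacent_in :: "real set \<Rightarrow> real \<Rightarrow> real \<Rightarrow> bool" where
  "adjacent_in D a b \<longleftrightarrow> a \<in> insert 0 D \<and> b \<in> D \<and> a < b \<and> {a<..<b} \<inter> D = {}"

lemma piece_containing: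
  fixes D :: "real set"
  assumes "finite D" "1 \<in> D" "y \<in> circle"
  obtains a b where "adjacent_in D a b" "a < y" "y \<le> b"
proof -
  define A where "A = {d \<in> insert 0 D. d < y}"
  define B where "B = {d \<in> D. y \<le> d}"
  have y: "0 < y" "y \<le> 1"
    using assms(3) by (auto simp: circle_def)
  have "finite A" "0 \<in> A" "finite B" "1 \<in> B"
    using assms y by (auto simp: A_def B_def)
  then have a: "Max A \<in> A" "\<And>d. d \<in> A \<Longrightarrow> d \<le> Max A"
    and b: "Min B \<in> B" "\<And>d. d \<in> B \<Longrightarrow> Min B \<le> d"
    by (auto intro: Max_in Min_in)
  have "{Max A<..<Min B} \<inter> D = {}"
  proof (rule ccontr)
    assume "{Max A<..<Min B} \<inter> D \<noteq> {}"
    then obtain d where d: "d \<in> D" "Max A < d" "d < Min B"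
      by auto
    show False
    proof (cases "d < y")
      case True
      then show False
        using a(2)[of d] d by (simp add: A_def)
    next
      case False
      then show False
        using b(2)[of d] d by (simp add: B_def)
    qed
  qed
  then show ?thesis
    using that a(1) b(1) by (auto simp: A_def B_def adjacent_in_def)
qed

lemma dyadic_interval_subset_between:
  assumes a: "a * pow2 N \<in> \<int>" and b: "b * pow2 N \<in> \<int>" and "a < y" "y \<le> b"
  shows "dyadic_interval N y \<subseteq> {a<..b}"
proof
  fix w assume "w \<in> dyadic_interval N y"
  then have w: "\<lceil>w * pow2 N\<rceil> = \<lceil>y * pow2 N\<rceil>"
    by (simp add: dyadic_interval_def)
  obtain i j where i: "a * pow2 N = of_int i" and j: "b * pow2 N = of_int j"
    using a b by (auto elim!: Ints_cases)
  have "a * pow2 N < y * pow2 N" "y * pow2 N \<le> b * pow2 N"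
    using \<open>a < y\<close> \<open>y \<le> b\<close> by simp_all
  then have "i < \<lceil>w * pow2 N\<rceil>" "\<lceil>w * pow2 N\<rceil> \<le> j"
    unfolding w i j by (simp_all add: less_ceiling_iff ceiling_le_iff)
  then have "a * pow2 N < w * pow2 N" "w * pow2 N \<le> b * pow2 N"
    unfolding i j by (simp_all add: less_ceiling_iff ceiling_le_iff)
  then show "w \<in> {a<..b}"
    by simp
qed

lemma thompsonV_pieces:
  assumes "f \<in> thompsonV"
  obtains D where "finite D" "D \<subseteq> circle" "1 \<in> D" "\<forall>d\<in>D. dyadic d"
    "\<forall>a b. adjacent_in D a b \<longrightarrow> (\<exists>k c. \<forall>x\<in>{a<..b}. f x = pow2 k * x + c)"
proof -
  have "\<exists>D. finite D \<and> D \<subseteq> circle \<and> 1 \<in> D \<and> (\<forall>d\<in>D. dyadic d) \<and>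
      (\<forall>a b. adjacent_in D a b \<longrightarrow> (\<exists>k c. \<forall>x\<in>{a<..b}. f x = pow2 k * x + c))"
    using assms unfolding thompsonV_def mem_Collect_eq adjacent_in_def by (elim conjE)
  then show ?thesis
    using that by blast
qed

lemma affine_piece_eventually_integral:
  assumes affine: "\<forall>x\<in>{a<..b}. f x = pow2 k * x + c" and "a < b"
    and "dyadic b" "dyadic (f b)"
  shows "eventually (\<lambda>M. c * pow2 (M - k) \<in> \<int>) at_top"
proof -
  obtain m0 where m0: "\<forall>m\<ge>m0. f b * pow2 m \<in> \<int>"
    using dyadic_scaled_Ints[OF \<open>dyadic (f b)\<close>] unfolding eventually_at_top_linorder by blast
  have "eventually (\<lambda>M. f b * pow2 (M - k) \<in> \<int>) at_top"
    unfolding eventually_at_top_linorder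
  proof (intro exI[of _ "m0 + k"] allI impI)
    fix M assume "m0 + k \<le> M"
    then have "m0 \<le> M - k"
      by simp
    then show "f b * pow2 (M - k) \<in> \<int>"
      using m0 by blast
  qed
  moreover have "eventually (\<lambda>M. b * pow2 M \<in> \<int>) at_top"
    using dyadic_scaled_Ints[OF \<open>dyadic b\<close>] .
  ultimately show ?thesis
  proof eventually_elim
    case (elim M)
    have "c = f b - pow2 k * b"
      using affine \<open>a < b\<close> by simp
    then have "c * pow2 (M - k) = (f b - pow2 k * b) * pow2 (M - k)"
      by (rule arg_cong)
    also have "\<dots> = f b * pow2 (M - k) - b * (pow2 k * pow2 (M - k))"
      by (simp add: algebra_simps)
    also have "pow2 k * pow2 (M - k) = pow2 M"
      using pow2_add[of k "M - k"] by simp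
    finally have "c * pow2 (M - k) = f b * pow2 (M - k) - b * pow2 M" .
    then show ?case
      using elim by simp
  qed
qed

lemma eventually_integral_pieces:
  assumes D: "finite D" "D \<subseteq> circle" "\<forall>d\<in>D. dyadic d"
    and dy: "\<forall>x\<in>circle. dyadic x \<longrightarrow> dyadic (f x)"
    and pieces: "\<forall>a b. adjacent_in D a b \<longrightarrow> (\<exists>k c. \<forall>x\<in>{a<..b}. f x = pow2 k * x + c)"
  shows "eventually (\<lambda>M. \<forall>a b. adjacent_in D a b \<longrightarrow>
      (\<exists>k c. (\<forall>x\<in>{a<..b}. f x = pow2 k * x + c) \<and> c * pow2 (M - k) \<in> \<int>)) at_top"
proof -
  define P where "P = {(a, b). adjacent_in D a b}"
  define integral_piece where "integral_piece M ab \<longleftrightarrow> (\<exists>k c.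
      (\<forall>x\<in>{fst ab<..snd ab}. f x = pow2 k * x + c) \<and> c * pow2 (M - k) \<in> \<int>)" for M ab
  have "finite P"
    unfolding P_def adjacent_in_def
    by (rule finite_subset[of _ "insert 0 D \<times> D"]) (use D(1) in auto)
  moreover have "\<forall>ab\<in>P. eventually (\<lambda>M. integral_piece M ab) at_top"
  proof
    fix ab assume "ab \<in> P"
    then obtain a b where ab: "ab = (a, b)" "adjacent_in D a b"
      unfolding P_def by blast
    then obtain k c where kc: "\<forall>x\<in>{a<..b}. f x = pow2 k * x + c"
      using pieces by blast
    have "b \<in> circle" "dyadic b" "a < b"
      using D ab(2) by (auto simp: adjacent_in_def)
    then have "eventually (\<lambda>M. c * pow2 (M - k) \<in> \<int>) at_top"
      using dy by (intro affine_piece_eventually_integral[OF kc]) auto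
    then show "eventually (\<lambda>M. integral_piece M ab) at_top"
      by eventually_elim (use kc ab(1) in \<open>auto simp: integral_piece_def\<close>)
  qed
  ultimately have "eventually (\<lambda>M. \<forall>ab\<in>P. integral_piece M ab) at_top"
    by (rule eventually_ball_finite)
  then show ?thesis
    by eventually_elim (auto simp: P_def integral_piece_def)
qed

lemma thompsonV_dyadic_pl:
  assumes fV: "f \<in> thompsonV"
  obtains N where "dyadic_pl f N"
proof -
  have bij: "bij_betw f circle circle" and dy: "\<forall>x\<in>circle. dyadic x \<longrightarrow> dyadic (f x)"
    using fV by (auto simp: thompsonV_def)
  obtain D where D: "finite D" "D \<subseteq> circle" "1 \<in> D" "\<forall>d\<in>D. dyadic d"
    and pieces: "\<forall>a b. adjacent_in D a b \<longrightarrow> (\<exists>k c. \<forall>x\<in>{a<..b}. f x = pow2 k * x + c)"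
    using thompsonV_pieces[OF fV] .
  have "eventually (\<lambda>M. \<forall>d\<in>insert 0 D. d * pow2 M \<in> \<int>) at_top"
  proof (rule eventually_ball_finite)
    have "dyadic 0"
      unfolding dyadic_def by (intro exI[of _ 0]) simp
    then show "\<forall>d\<in>insert 0 D. eventually (\<lambda>M. d * pow2 M \<in> \<int>) at_top"
      using D(4) dyadic_scaled_Ints by blast
  qed (use D(1) in simp)
  moreover note eventually_integral_pieces[OF D(1,2,4) dy pieces]
  moreover have "eventually (\<lambda>M::int. 0 \<le> M) at_top"
    by (rule eventually_ge_at_top)
  ultimately have "eventually (\<lambda>M. (\<forall>d\<in>insert 0 D. d * pow2 M \<in> \<int>) \<and>
      (\<forall>a b. adjacent_in D a b \<longrightarrow>
        (\<exists>k c. (\<forall>x\<in>{a<..b}. f x = pow2 k * x + c) \<and> c * pow2 (M - k) \<in> \<int>)) \<and> 0 \<le> M) at_top"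
    by eventually_elim blast
  then obtain N where grid: "\<forall>d\<in>insert 0 D. d * pow2 N \<in> \<int>"
    and affine: "\<forall>a b. adjacent_in D a b \<longrightarrow>
      (\<exists>k c. (\<forall>x\<in>{a<..b}. f x = pow2 k * x + c) \<and> c * pow2 (N - k) \<in> \<int>)"
    and "0 \<le> N"
    unfolding eventually_at_top_linorder by blast
  have "\<exists>k c. affine_piece f N y k c" if y: "y \<in> circle" for y
  proof -
    obtain a b where ab: "adjacent_in D a b" "a < y" "y \<le> b"
      by (rule piece_containing[OF D(1,3) y])
    then obtain k c where "\<forall>x\<in>{a<..b}. f x = pow2 k * x + c" "c * pow2 (N - k) \<in> \<int>"
      using affine by blast
    moreover have "dyadic_interval N y \<subseteq> {a<..b}"
      using grid ab by (intro dyadic_interval_subset_between) (auto simp: adjacent_in_def)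
    ultimately show ?thesis
      unfolding affine_piece_def by blast
  qed
  then have "dyadic_pl f N"
    unfolding dyadic_pl_def using bij \<open>0 \<le> N\<close> by blast
  then show ?thesis
    by (rule that)
qed

section \<open>The wandering open set\<close>

lemma circle_open_greaterThanLessThan:
  assumes "0 \<le> a" "b \<le> 1"
  shows "circle_open {a<..<b}"
proof -
  have "circ_proj -` {a<..<b} = (\<Union>m::int. {of_int m + a <..< of_int m + b})"
  proof (intro set_eqI iffI)
    fix x assume "x \<in> circ_proj -` {a<..<b}"
    then have "a < x - of_int \<lceil>x\<rceil> + 1" "x - of_int \<lceil>x\<rceil> + 1 < b"
      by (auto simp: circ_proj_def)
    then have "x \<in> {of_int (\<lceil>x\<rceil> - 1) + a <..< of_int (\<lceil>x\<rceil> - 1) + b}"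
      by simp
    then show "x \<in> (\<Union>m::int. {of_int m + a <..< of_int m + b})"
      by blast
  next
    fix x assume "x \<in> (\<Union>m::int. {of_int m + a <..< of_int m + b})"
    then obtain m :: int where m: "of_int m + a < x" "x < of_int m + b"
      by auto
    then have "\<lceil>x\<rceil> = m + 1"
      using assms by (simp add: ceiling_eq_iff)
    then show "x \<in> circ_proj -` {a<..<b}"
      using m by (simp add: circ_proj_def)
  qed
  moreover have "open (\<Union>m::int. {of_int m + a <..< of_int m + b})"
    by (intro open_UN) auto
  moreover have "{a<..<b} \<subseteq> circle"
    using assms by (auto simp: circle_def)
  ultimately show ?thesis
    by (simp add: circle_open_def)
qed

lemma circle_open_subset_dyadic_interval:
  assumes "z \<in> circle" "0 \<le> l"
  obtains U where "U \<noteq> {}" "circle_open U" "U \<subseteq> dyadic_interval l z"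
proof
  define j where "j = \<lceil>z * pow2 l\<rceil>"
  have "j \<in> {1 .. 2 ^ nat l}"
    unfolding j_def using ceiling_scaled_circle[OF assms] .
  moreover have "pow2 l = 2 ^ nat l"
    using assms(2) by (rule pow2_nonneg)
  ultimately have "0 \<le> (of_int j - 1) / pow2 l" "of_int j / pow2 l \<le> 1"
    by (auto simp: of_int_le_iff[symmetric])
  then show "circle_open {(of_int j - 1) / pow2 l <..< of_int j / pow2 l}"
    by (rule circle_open_greaterThanLessThan)
  have "(of_int j - 1) / pow2 l < of_int j / pow2 l"
    by (simp add: divide_strict_right_mono)
  then show "{(of_int j - 1) / pow2 l <..< of_int j / pow2 l} \<noteq> {}"
    by simp
  show "{(of_int j - 1) / pow2 l <..< of_int j / pow2 l} \<subseteq> dyadic_interval l z"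
    unfolding j_def by (rule greaterThanLessThan_subset_dyadic_interval)
qed

lemma aperiodic_of_infinite_order:
  assumes fixed: "\<forall>x. x \<notin> circle \<longrightarrow> g x = x" and "infinite_order g"
  shows "\<not> (\<exists>P>0. \<forall>x\<in>circle. (g ^^ P) x = x)"
proof
  assume "\<exists>P>0. \<forall>x\<in>circle. (g ^^ P) x = x"
  then obtain P where P: "0 < P" "\<forall>x\<in>circle. (g ^^ P) x = x"
    by blast
  have "(g ^^ n) x = x" if "x \<notin> circle" for x n
    using fixed that by (induction n) simp_all
  then have "g ^^ P = id"
    using P(2) by fastforce
  then show False
    using \<open>infinite_order g\<close> P(1) unfolding infinite_order_def by blast
qed

lemma exists_forward_wandering_dyadic_interval:
  assumes G: "dyadic_pl g N" and aperiodic: "\<not> (\<exists>P>0. \<forall>x\<in>circle. (g ^^ P) x = x)"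
  shows "\<exists>z\<in>circle. \<exists>l\<ge>0. forward_wandering g (dyadic_interval l z)"
proof -
  have N: "0 \<le> N"
    using G by (rule dyadic_pl_level_nonneg)
  obtain K where K: "\<forall>y\<in>circle. \<bar>log_slope g N y\<bar> < K"
    using log_slope_bounded[OF G] by blast
  have K0: "0 < K"
    using K by (rule bound_on_circle_pos)
  note Gi = dyadic_pl_vinv[OF G K]
  consider (descent) "\<forall>B. \<exists>x\<in>circle. \<exists>t. log_slope_sum g N x t < B"
    | (ascent) "\<forall>B. \<exists>x\<in>circle. \<exists>t. log_slope_sum (vinv g) (N + K) x t < B"
    | (bounded) B1 B2 where "\<forall>x\<in>circle. \<forall>t. B1 \<le> log_slope_sum g N x t"
        "\<forall>x\<in>circle. \<forall>t. B2 \<le> log_slope_sum (vinv g) (N + K) x t"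
    by (metis not_less)
  then show ?thesis
  proof cases
    case descent
    then obtain z where "z \<in> circle" "forward_wandering g (dyadic_interval (N + 1) z)"
      using forward_wandering_of_unbounded_descent[OF G] by blast
    then show ?thesis
      using N by (intro bexI[of _ z] exI[of _ "N + 1"]) auto
  next
    case ascent
    then obtain z where z: "z \<in> circle"
      and W: "forward_wandering (vinv g) (dyadic_interval (N + K + 1) z)"
      using forward_wandering_of_unbounded_descent[OF Gi] by blast
    have "dyadic_interval (N + K + 1) z \<subseteq> circle"
      using dyadic_interval_subset_circle[OF z] N K0 by simp
    then have "forward_wandering g (dyadic_interval (N + K + 1) z)"
      using forward_wandering_of_vinv[OF dyadic_pl_bij[OF G] _ W] by blast
    then show ?thesis
      using z N K0 by (intro bexI[of _ z] exI[of _ "N + K + 1"]) auto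
  next
    case bounded
    have "\<forall>x\<in>circle. \<forall>n. B1 \<le> log_slope_sum g N x n \<and> log_slope_sum g N x n \<le> - B2"
    proof (intro ballI allI conjI)
      fix x n assume x: "x \<in> circle"
      show "B1 \<le> log_slope_sum g N x n"
        using bounded(1) x by blast
      have "B2 \<le> log_slope_sum (vinv g) (N + K) ((g ^^ n) x) n"
        using bounded(2) dyadic_pl_funpow_in_circle[OF G x] by blast
      then show "log_slope_sum g N x n \<le> - B2"
        using log_slope_sum_vinv[OF G K x] by simp
    qed
    then show ?thesis
      using periodic_of_bounded_log_slope_sums[OF G] aperiodic by blast
  qed
qed

theorem lemma4p2:
  fixes \<gamma> :: "real \<Rightarrow> real"
  assumes "\<gamma> \<in> thompsonV" and "infinite_order \<gamma>"
  shows "\<exists>U. U \<noteq> {} \<and> circle_open U \<and> wandering \<gamma> U"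
proof -
  obtain N where G: "dyadic_pl \<gamma> N"
    using thompsonV_dyadic_pl[OF assms(1)] .
  have "\<forall>x. x \<notin> circle \<longrightarrow> \<gamma> x = x"
    using assms(1) by (simp add: thompsonV_def)
  then have "\<not> (\<exists>P>0. \<forall>x\<in>circle. (\<gamma> ^^ P) x = x)"
    using assms(2) by (rule aperiodic_of_infinite_order)
  then obtain z l where z: "z \<in> circle" and l: "0 \<le> l"
    and W: "forward_wandering \<gamma> (dyadic_interval l z)"
    using exists_forward_wandering_dyadic_interval[OF G] by blast
  obtain U where U: "U \<noteq> {}" "circle_open U" "U \<subseteq> dyadic_interval l z"
    using circle_open_subset_dyadic_interval[OF z l] .
  have "U \<subseteq> circle"
    using U(3) dyadic_interval_subset_circle[OF z l] by blast
  moreover have "forward_wandering \<gamma> U"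
    using W U(3) by (rule forward_wandering_subset)
  ultimately have "wandering \<gamma> U"
    by (rule wandering_of_forward_wandering[OF dyadic_pl_bij[OF G]])
  then show ?thesis
    using U by blast
qed

end
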